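(* Let $F$ be a graph with $\gamma(F)=1$ and $k = |E(F)| \geq 3$. Let $G$ be either a pure $(m,F)$-special graph or a copy of $F+e$ for some $e \in E(\overline{F})$. Then: (a) for every $x \in V(G)$, $G$ has a minimum $F$-isolating set $D$ with $x \in D$; (b) if $G$ is a pure $(m,F)$-special graph and $x \in V(G)$ is such that $x$ is not a vertex of the quotient graph in any representation of $G$ as a pure $(m,F)$-special graph, then $\iota(G-x,F) = \iota(G,F) - 1$.
   Context: All graphs are finite and simple. For $D \subseteq V(G)$, $N_G[D]$ is the closed neighbourhood of $D$; $G-x$ is $G$ with vertex $x$ deleted. A set $D \subseteq V(G)$ is an $F$-isolating set of $G$ if $G - N_G[D]$ contains no subgraph isomorphic to $F$; $\iota(G,F)$ is the minimum size of such a set, and a minimum $F$-isolating set is one of this size. $\gamma(F)=1$ means $F$ has a vertex adjacent to all other vertices of $F$. $\overline{F}$ is the complement of $F$ and $F+e = (V(F),E(F)\cup\{e\})$. A pure $(m,F)$-special graph is a graph obtained as follows: $m+1 = q(k+2)$ for an integer $q\ge 1$; take a tree $T$ with $q$ vertices $v_1,\dots,v_q$, pairwise disjoint copies $F_1,\dots,F_q$ of $F$ disjoint from $V(T)$, and vertices $w_i\in V(F_i)$; the graph has vertex set $V(T)\cup\bigcup_i V(F_i)$ and edge set $E(T)\cup\bigcup_i (E(F_i)\cup\{v_iw_i\})$. A choice of such $T, F_i, w_i$ is a representation of the graph; $T$ is its quotient graph, the subgraph $G_i$ with vertex set $\{v_i\}\cup V(F_i)$ and edge set $E(F_i)\cup\{v_iw_i\}$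 is an $F$-constituent, and $v_i$ is its $F$-connection. (For such a graph, $\iota(G,F) = q$.) *)

theory Defs
  imports Main
begin

type_synonym 'a graph = "'a set \<times> 'a set set"

definition verts :: "'a graph \<Rightarrow> 'a set" where "verts G = fst G"
definition edges :: "'a graph \<Rightarrow> 'a set set" where "edges G = snd G"

definition wf_graph :: "'a graph \<Rightarrow> bool" where
  "wf_graph G \<longleftrightarrow> finite (verts G) \<and>
     (\<forall>e\<in>edges G. \<exists>u v. e = {u, v} \<and> u \<noteq> v \<and> u \<in> verts G \<and> v \<in> verts G)"

definition graph_iso :: "'b graph \<Rightarrow> 'a graph \<Rightarrow> ('b \<Rightarrow> 'a) \<Rightarrow> bool" where
  "graph_iso A B f \<longleftrightarrow> bij_betw f (verts A) (verts B) \<and>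
     edges B = (\<lambda>e. f ` e) ` edges A"

definition isomorphic :: "'b graph \<Rightarrow> 'a graph \<Rightarrow> bool" where
  "isomorphic A B \<longleftrightarrow> (\<exists>f. graph_iso A B f)"

definition contains_copy :: "'a graph \<Rightarrow> 'b graph \<Rightarrow> bool" where
  "contains_copy H F \<longleftrightarrow> (\<exists>f. inj_on f (verts F) \<and> f ` verts F \<subseteq> verts H \<and>
     (\<forall>e\<in>edges F. f ` e \<in> edges H))"

definition induced :: "'a graph \<Rightarrow> 'a set \<Rightarrow> 'a graph" where
  "induced G S = (S, {e \<in> edges G. e \<subseteq> S})"

definition closed_nbhd :: "'a graph \<Rightarrow> 'a set \<Rightarrow> 'a set" where
  "closed_nbhd G D = D \<union> {v \<in> verts G. \<exists>u\<in>D. {u, v} \<in> edges G}"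

definition delete_vertex :: "'a graph \<Rightarrow> 'a \<Rightarrow> 'a graph" where
  "delete_vertex G x = induced G (verts G - {x})"

definition isolating :: "'a graph \<Rightarrow> 'b graph \<Rightarrow> 'a set \<Rightarrow> bool" where
  "isolating G F D \<longleftrightarrow> D \<subseteq> verts G \<and>
     \<not> contains_copy (induced G (verts G - closed_nbhd G D)) F"

definition iota :: "'a graph \<Rightarrow> 'b graph \<Rightarrow> nat" where
  "iota G F = (LEAST n. \<exists>D. isolating G F D \<and> card D = n)"

definition min_isolating :: "'a graph \<Rightarrow> 'b graph \<Rightarrow> 'a set \<Rightarrow> bool" where
  "min_isolating G F D \<longleftrightarrow> isolating G F D \<and> card D = iota G F"

text \<open>gamma(F) = 1: some vertex adjacent to all other vertices.\<close>
definition dominating_vertex_exists :: "'b graph \<Rightarrow> bool" where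
  "dominating_vertex_exists F \<longleftrightarrow>
     (\<exists>c\<in>verts F. \<forall>v\<in>verts F. v \<noteq> c \<longrightarrow> {c, v} \<in> edges F)"

definition connected_graph :: "'a graph \<Rightarrow> bool" where
  "connected_graph T \<longleftrightarrow> verts T \<noteq> {} \<and>
     (\<forall>u\<in>verts T. \<forall>v\<in>verts T. (u, v) \<in> {(a, b). {a, b} \<in> edges T}\<^sup>*)"

definition has_cycle :: "'a graph \<Rightarrow> bool" where
  "has_cycle T \<longleftrightarrow> (\<exists>cs. distinct cs \<and> length cs \<ge> 3 \<and> set cs \<subseteq> verts T \<and>
     (\<forall>i < length cs. {cs ! i, cs ! ((i + 1) mod length cs)} \<in> edges T))"

definition is_tree :: "'a graph \<Rightarrow> bool" where
  "is_tree T \<longleftrightarrow> wf_graph T \<and> connected_graph T \<and> \<not> has_cycle T"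

text \<open>A representation of G as a pure (m,F)-special graph: quotient tree T with
  vertices v 0, ..., v (q-1), copies Fc i of F, attachment vertices w i.\<close>
definition special_rep ::
  "nat \<Rightarrow> 'b graph \<Rightarrow> 'a graph \<Rightarrow> nat \<Rightarrow> 'a graph \<Rightarrow> (nat \<Rightarrow> 'a) \<Rightarrow> (nat \<Rightarrow> 'a graph)
     \<Rightarrow> (nat \<Rightarrow> 'a) \<Rightarrow> bool" where
  "special_rep m F G q T v Fc w \<longleftrightarrow>
     q \<ge> 1 \<and> m + 1 = q * (card (edges F) + 2) \<and>
     is_tree T \<and> verts T = v ` {..<q} \<and> inj_on v {..<q} \<and>
     (\<forall>i<q. isomorphic F (Fc i)) \<and>
     (\<forall>i<q. \<forall>j<q. i \<noteq> j \<longrightarrow> verts (Fc i) \<inter> verts (Fc j) = {}) \<and>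
     (\<forall>i<q. verts (Fc i) \<inter> verts T = {}) \<and>
     (\<forall>i<q. w i \<in> verts (Fc i)) \<and>
     G = (verts T \<union> (\<Union>i<q. verts (Fc i)),
          edges T \<union> (\<Union>i<q. edges (Fc i) \<union> {{v i, w i}}))"

definition pure_special :: "nat \<Rightarrow> 'b graph \<Rightarrow> 'a graph \<Rightarrow> bool" where
  "pure_special m F G \<longleftrightarrow> (\<exists>q T v Fc w. special_rep m F G q T v Fc w)"

definition add_edge :: "'b graph \<Rightarrow> 'b set \<Rightarrow> 'b graph" where
  "add_edge F e = (verts F, insert e (edges F))"

definition complement_edge :: "'b graph \<Rightarrow> 'b set \<Rightarrow> bool" where
  "complement_edge F e \<longleftrightarrow> (\<exists>u v. e = {u, v} \<and> u \<noteq> v \<and> u \<in> verts F \<and> v \<in> verts F \<and>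
     e \<notin> edges F)"

end

theory Submission
  imports Defs
begin

text \<open>If F has a dominating vertex c, any copy of F lies inside the closed neighbourhood of the image
  of c; so a vertex set in which no closed neighbourhood has |V(F)| vertices contains no copy of F.
  In a pure special graph the constituents \<open>G\<^sub>i = v\<^sub>i + F\<^sub>i\<close> are disjoint and \<open>F\<^sub>i\<close> is
  adjacent only to \<open>G\<^sub>i\<close>, so every F-isolating set meets every constituent and \<open>\<iota>(G,F) \<ge> q\<close>.
  Conversely, removing two vertices of each constituent and all quotient vertices but one leaves
  pieces of at most |V(F)| - 1 vertices inside single constituents. This yields isolating sets of
  size q through any prescribed vertex x, and for x in \<open>F\<^sub>i\<close> and q \<ge> 2 the isolating set
  \<open>{v\<^sub>j | j \<noteq> i}\<close> of \<open>G - x\<close>. For q = 1, if \<open>G - x\<close> still contains F, counting vertices and edges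
  shows that \<open>G - x \<cong> F\<close> and that x is a pendant vertex, so x is the quotient vertex of another
  representation. Adding x to an F-isolating set of \<open>G - x\<close> isolates G, which gives the matching
  lower bound \<open>\<iota>(G - x, F) \<ge> q - 1\<close>. For \<open>G \<cong> F + e\<close> a single vertex is isolating because fewer than |V(F)|
  vertices remain.\<close>

lemma verts_pair [simp]: "verts (V, E) = V"
  by (simp add: verts_def)

lemma edges_pair [simp]: "edges (V, E) = E"
  by (simp add: edges_def)

lemma graph_eq_pair: "G = (verts G, edges G)"
  by (simp add: verts_def edges_def)

lemma verts_induced [simp]: "verts (induced G S) = S"
  and edges_induced [simp]: "edges (induced G S) = {e \<in> edges G. e \<subseteq> S}"
  by (simp_all add: induced_def)

lemma verts_delete_vertex [simp]: "verts (delete_vertex G x) = verts G - {x}"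
  and edges_delete_vertex [simp]: "edges (delete_vertex G x) = {e \<in> edges G. e \<subseteq> verts G - {x}}"
  by (simp_all add: delete_vertex_def)

lemma closed_nbhd_subset: "D \<subseteq> closed_nbhd G D"
  by (auto simp: closed_nbhd_def)

lemma closed_nbhdI: "u \<in> D \<Longrightarrow> {u, z} \<in> edges G \<Longrightarrow> z \<in> verts G \<Longrightarrow> z \<in> closed_nbhd G D"
  by (auto simp: closed_nbhd_def)

lemma closed_nbhd_empty [simp]: "closed_nbhd G {} = {}"
  by (simp add: closed_nbhd_def)

lemma wf_graph_edge_subset: "wf_graph G \<Longrightarrow> e \<in> edges G \<Longrightarrow> e \<subseteq> verts G"
  by (fastforce simp: wf_graph_def)

lemma wf_graph_finite_edges:
  assumes "wf_graph G"
  shows "finite (edges G)"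
proof (rule finite_subset)
  show "edges G \<subseteq> Pow (verts G)"
    using wf_graph_edge_subset[OF assms] by blast
  show "finite (Pow (verts G))"
    using assms by (simp add: wf_graph_def)
qed

lemma wf_graph_two_le_card_verts:
  assumes "wf_graph G" "edges G \<noteq> {}"
  shows "2 \<le> card (verts G)"
proof -
  obtain a b where "a \<noteq> b" "a \<in> verts G" "b \<in> verts G"
    using assms unfolding wf_graph_def by blast
  then have "card {a, b} \<le> card (verts G)"
    using assms(1) by (intro card_mono) (auto simp: wf_graph_def)
  with \<open>a \<noteq> b\<close> show ?thesis by simp
qed

lemma inj_on_image_edges:
  assumes "inj_on f (verts A)" "wf_graph A"
  shows "inj_on ((`) f) (edges A)"
  using inj_on_image_Pow[OF assms(1)] wf_graph_edge_subset[OF assms(2)]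
  by (blast intro: inj_on_subset)

lemma graph_iso_card_verts: "graph_iso A B f \<Longrightarrow> card (verts B) = card (verts A)"
  by (metis bij_betw_same_card graph_iso_def)

lemma graph_iso_card_edges:
  assumes "graph_iso A B f" "wf_graph A"
  shows "card (edges B) = card (edges A)"
proof -
  have "inj_on f (verts A)" "edges B = (`) f ` edges A"
    using assms(1) by (auto simp: graph_iso_def bij_betw_def)
  then show ?thesis
    using card_image[OF inj_on_image_edges[OF _ assms(2)]] by simp
qed

lemma graph_iso_wf_graph:
  assumes iso: "graph_iso A B f" and wf: "wf_graph A"
  shows "wf_graph B"
  unfolding wf_graph_def
proof (intro conjI ballI)
  have bij: "bij_betw f (verts A) (verts B)" and E: "edges B = (`) f ` edges A"
    using iso by (simp_all add: graph_iso_def)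
  show "finite (verts B)"
    using bij wf by (metis bij_betw_finite wf_graph_def)
  fix e assume "e \<in> edges B"
  then obtain a b where "e = {f a, f b}" "a \<noteq> b" "a \<in> verts A" "b \<in> verts A"
    using E wf unfolding wf_graph_def by auto
  with bij show "\<exists>u v. e = {u, v} \<and> u \<noteq> v \<and> u \<in> verts B \<and> v \<in> verts B"
    by (metis bij_betw_apply bij_betw_imp_inj_on inj_on_contraD)
qed

lemma graph_iso_dominating_vertex_exists:
  assumes iso: "graph_iso A B f" and "dominating_vertex_exists A"
  shows "dominating_vertex_exists B"
proof -
  obtain c where c: "c \<in> verts A" "\<forall>u\<in>verts A. u \<noteq> c \<longrightarrow> {c, u} \<in> edges A"
    using assms(2) by (auto simp: dominating_vertex_exists_def)
  have VB: "verts B = f ` verts A" and EB: "edges B = (`) f ` edges A"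
    using iso by (auto simp: graph_iso_def bij_betw_def)
  have "{f c, f u} \<in> edges B" if "u \<in> verts A" "f u \<noteq> f c" for u
  proof -
    have "{c, u} \<in> edges A"
      using c that by auto
    then have "f ` {c, u} \<in> edges B"
      using EB by blast
    then show ?thesis
      by simp
  qed
  with c(1) VB show ?thesis
    by (auto simp: dominating_vertex_exists_def)
qed

lemma dominating_vertex_exists_neighbour:
  assumes dom: "dominating_vertex_exists H" and x: "x \<in> verts H" and two: "2 \<le> card (verts H)"
  shows "\<exists>y. y \<noteq> x \<and> {x, y} \<in> edges H"
proof -
  obtain c where c: "c \<in> verts H" "\<forall>u\<in>verts H. u \<noteq> c \<longrightarrow> {c, u} \<in> edges H"
    using dom by (auto simp: dominating_vertex_exists_def)
  show ?thesis
  proof (cases "x = c")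
    case True
    have "\<not> card (verts H) \<le> Suc 0"
      using two by simp
    then obtain y where "y \<in> verts H" "y \<noteq> x"
      using two by (metis card.infinite card_le_Suc0_iff_eq not_numeral_le_zero)
    with True c show ?thesis by blast
  next
    case False
    with c x show ?thesis by (metis insert_commute)
  qed
qed

lemma connected_graph_neighbour:
  assumes conn: "connected_graph T" and "u \<in> verts T" "u' \<in> verts T" "u \<noteq> u'"
  shows "\<exists>z. {u, z} \<in> edges T"
proof -
  have "(u, u') \<in> {(a, b). {a, b} \<in> edges T}\<^sup>*"
    using assms by (simp add: connected_graph_def)
  then show ?thesis
    using \<open>u \<noteq> u'\<close> by (cases rule: converse_rtranclE) blast+
qed

lemma contains_copy_mono:
  "contains_copy H F \<Longrightarrow> verts H \<subseteq> verts H' \<Longrightarrow> edges H \<subseteq> edges H' \<Longrightarrow> contains_copy H' F"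
  unfolding contains_copy_def by (meson subset_trans subsetD)

lemma contains_copy_if_iso_subgraph:
  assumes "graph_iso F H f" "verts H \<subseteq> verts K" "edges H \<subseteq> edges K"
  shows "contains_copy K F"
  unfolding contains_copy_def
proof (intro exI conjI ballI)
  show "inj_on f (verts F)" "f ` verts F \<subseteq> verts K"
    using assms(1,2) by (auto simp: graph_iso_def bij_betw_def)
  show "f ` e \<in> edges K" if "e \<in> edges F" for e
    using assms(1,3) that by (auto simp: graph_iso_def)
qed

lemma contains_copy_card_verts:
  "contains_copy H F \<Longrightarrow> finite (verts H) \<Longrightarrow> card (verts F) \<le> card (verts H)"
  unfolding contains_copy_def by (blast intro: card_inj_on_le)

lemma contains_copy_induced_large_nbhd:
  assumes copy: "contains_copy (induced G S) F" and dom: "dominating_vertex_exists F"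
    and S: "S \<subseteq> verts G" "finite S"
  shows "\<exists>y\<in>S. card (verts F) \<le> card (closed_nbhd G {y} \<inter> S)"
proof -
  obtain f where inj: "inj_on f (verts F)" and fV: "f ` verts F \<subseteq> S"
    and fE: "\<forall>e\<in>edges F. f ` e \<in> edges G"
    using copy by (auto simp: contains_copy_def)
  obtain c where c: "c \<in> verts F" "\<forall>u\<in>verts F. u \<noteq> c \<longrightarrow> {c, u} \<in> edges F"
    using dom by (auto simp: dominating_vertex_exists_def)
  have "f ` verts F \<subseteq> closed_nbhd G {f c} \<inter> S"
  proof
    fix z assume "z \<in> f ` verts F"
    then obtain u where u: "u \<in> verts F" "z = f u" by blast
    have "{f c, f u} \<in> edges G" if "u \<noteq> c"
    proof -
      have "{c, u} \<in> edges F"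
        using c u(1) that by blast
      then show ?thesis
        using fE by force
    qed
    then show "z \<in> closed_nbhd G {f c} \<inter> S"
      using u fV S(1) by (cases "u = c") (auto intro: closed_nbhdI simp: closed_nbhd_def)
  qed
  then have "card (verts F) \<le> card (closed_nbhd G {f c} \<inter> S)"
    using inj S(2) by (blast intro: card_inj_on_le)
  with c(1) fV show ?thesis by blast
qed

lemma contains_copy_same_size_iso:
  assumes copy: "contains_copy H F" and wf: "wf_graph F"
    and fin: "finite (verts H)" "finite (edges H)"
    and card_V: "card (verts H) \<le> card (verts F)" and card_E: "card (edges H) \<le> card (edges F)"
  shows "isomorphic F H"
proof -
  obtain f where inj: "inj_on f (verts F)" and fV: "f ` verts F \<subseteq> verts H"
    and fE: "(`) f ` edges F \<subseteq> edges H"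
    using copy by (auto simp: contains_copy_def)
  have "f ` verts F = verts H"
    using fin card_V card_image[OF inj] card_mono[OF fin(1) fV] by (intro card_subset_eq[OF fin(1) fV]) simp
  moreover have "(`) f ` edges F = edges H"
    using fin card_E card_image[OF inj_on_image_edges[OF inj wf]] card_mono[OF fin(2) fE]
    by (intro card_subset_eq[OF fin(2) fE]) simp
  ultimately have "graph_iso F H f"
    using inj by (simp add: graph_iso_def bij_betw_def)
  then show ?thesis by (auto simp: isomorphic_def)
qed

lemma delete_vertex_contains_copy_pendant:
  assumes wf_F: "wf_graph F" and wf_G: "wf_graph G"
    and card_V: "card (verts G) = Suc (card (verts F))"
    and card_E: "card (edges G) = Suc (card (edges F))"
    and e: "e \<in> edges G" "x \<in> e"
    and copy: "contains_copy (delete_vertex G x) F"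
  shows "isomorphic F (delete_vertex G x)"
    and "\<exists>y. y \<noteq> x \<and> y \<in> verts G \<and> edges G = insert {x, y} (edges (delete_vertex G x))"
proof -
  let ?H = "delete_vertex G x"
  have fin: "finite (verts G)" "finite (edges G)"
    using wf_G wf_graph_finite_edges[OF wf_G] by (auto simp: wf_graph_def)
  have x: "x \<in> verts G"
    using e wf_graph_edge_subset[OF wf_G] by blast
  have EH: "edges ?H \<subseteq> edges G - {e}"
    using e by auto
  have card_EG: "card (edges G - {e}) = card (edges F)"
    using card_E e(1) by simp
  have card_EH: "card (edges ?H) \<le> card (edges F)"
    using card_mono[OF _ EH] fin card_EG by simp
  show iso: "isomorphic F ?H"
    using x fin card_V card_EH
    by (intro contains_copy_same_size_iso[OF copy wf_F]) (simp_all add: card_Diff_singleton)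
  then obtain f where "graph_iso F ?H f"
    by (auto simp: isomorphic_def)
  then have "card (edges ?H) = card (edges F)"
    using graph_iso_card_edges wf_F by blast
  then have "edges ?H = edges G - {e}"
    using fin card_EG EH by (intro card_subset_eq) simp_all
  moreover obtain y where "e = {x, y}" "y \<noteq> x" "y \<in> verts G"
    using wf_G e unfolding wf_graph_def by fastforce
  ultimately show "\<exists>y. y \<noteq> x \<and> y \<in> verts G \<and> edges G = insert {x, y} (edges ?H)"
    using insert_Diff[OF e(1)] by metis
qed

lemma is_tree_singleton: "is_tree ({x}, {})"
proof -
  have "\<not> has_cycle ({x}, {})"
  proof
    assume "has_cycle ({x}, {})"
    then obtain cs where cs: "distinct cs" "3 \<le> length cs" "set cs \<subseteq> {x}"
      unfolding has_cycle_def verts_pair by blast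
    then have "length cs \<le> 1"
      using card_mono[OF _ cs(3)] distinct_card[OF cs(1)] by simp
    with cs(2) show False by simp
  qed
  moreover have "wf_graph ({x}, {})"
    by (simp add: wf_graph_def)
  moreover have "connected_graph ({x}, {})"
    by (simp add: connected_graph_def)
  ultimately show ?thesis
    by (simp add: is_tree_def)
qed

lemma isolating_verts:
  assumes "verts F \<noteq> {}"
  shows "isolating G F (verts G)"
proof -
  have none_left: "verts G - closed_nbhd G (verts G) = {}"
    by (simp add: closed_nbhd_def)
  show ?thesis
    unfolding isolating_def none_left using assms by (simp add: contains_copy_def)
qed

lemma iota_le:
  assumes "isolating G F D"
  shows "iota G F \<le> card D"
  unfolding iota_def by (rule Least_le) (use assms in blast)

lemma min_isolating_exists:
  assumes "isolating G F D"
  shows "\<exists>D'. min_isolating G F D'"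
proof -
  have "\<exists>D'. isolating G F D' \<and> card D' = iota G F"
    unfolding iota_def by (rule LeastI[of _ "card D"]) (use assms in blast)
  then show ?thesis
    by (simp add: min_isolating_def)
qed

lemma iota_eqI:
  assumes "isolating G F D" "\<And>D'. isolating G F D' \<Longrightarrow> card D \<le> card D'"
  shows "iota G F = card D"
  unfolding iota_def by (rule Least_equality) (use assms in auto)

lemma isolating_insert_delete_vertex:
  assumes iso: "isolating (delete_vertex G x) F D" and x: "x \<in> verts G"
  shows "isolating G F (insert x D)"
proof -
  let ?S = "verts G - closed_nbhd G (insert x D)"
  let ?S' = "verts (delete_vertex G x) - closed_nbhd (delete_vertex G x) D"
  have D: "D \<subseteq> verts G - {x}"
    using iso by (simp add: isolating_def)
  have "?S \<subseteq> ?S'"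
    by (auto simp: closed_nbhd_def)
  then have "edges (induced G ?S) \<subseteq> edges (induced (delete_vertex G x) ?S')"
    by auto
  moreover have "\<not> contains_copy (induced (delete_vertex G x) ?S') F"
    using iso by (simp add: isolating_def)
  ultimately have "\<not> contains_copy (induced G ?S) F"
    using \<open>?S \<subseteq> ?S'\<close> contains_copy_mono by (metis verts_induced)
  with D x show ?thesis
    unfolding isolating_def by blast
qed

lemma iota_le_iota_delete_vertex:
  assumes "verts F \<noteq> {}" "x \<in> verts G"
  shows "iota G F \<le> iota (delete_vertex G x) F + 1"
proof -
  obtain D where iso: "isolating (delete_vertex G x) F D" and card_D: "card D = iota (delete_vertex G x) F"
    using min_isolating_exists[OF isolating_verts[OF assms(1), of "delete_vertex G x"]]
    unfolding min_isolating_def by blast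
  have "iota G F \<le> card (insert x D)"
    using iota_le[OF isolating_insert_delete_vertex[OF iso assms(2)]] .
  also have "\<dots> \<le> card D + 1"
    by (cases "finite D") (simp_all add: card_insert_if)
  finally show ?thesis
    using card_D by simp
qed

lemma isolating_delete_vertexI:
  assumes D: "D \<subseteq> verts G - {x}"
    and no_copy: "\<not> contains_copy (induced G (verts G - insert x (closed_nbhd G D))) F"
  shows "isolating (delete_vertex G x) F D"
proof -
  let ?S = "verts G - insert x (closed_nbhd G D)"
  have "verts (delete_vertex G x) - closed_nbhd (delete_vertex G x) D = ?S"
    using D by (auto simp: closed_nbhd_def)
  moreover have "induced (delete_vertex G x) ?S = induced G ?S"
    by (auto simp: induced_def)
  ultimately show ?thesis
    using D no_copy by (simp add: isolating_def)
qed

lemma contains_copy_induced_verts: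
  assumes "contains_copy G F" "wf_graph F"
  shows "contains_copy (induced G (verts G)) F"
proof -
  obtain f where inj: "inj_on f (verts F)" and fV: "f ` verts F \<subseteq> verts G"
    and fE: "\<forall>e\<in>edges F. f ` e \<in> edges G"
    using assms(1) by (auto simp: contains_copy_def)
  have "f ` e \<subseteq> verts G" if "e \<in> edges F" for e
    using fV wf_graph_edge_subset[OF assms(2) that] by blast
  with inj fV fE show ?thesis
    unfolding contains_copy_def by (intro exI[of _ f]) simp
qed

text \<open>Deleting the closed neighbourhood of a single vertex leaves fewer than |V(F)| vertices.\<close>

lemma min_isolating_singleton:
  assumes wf: "wf_graph F" and copy: "contains_copy G F" and fin: "finite (verts G)"
    and card_V: "card (verts G) \<le> card (verts F)" and x: "x \<in> verts G"
  shows "min_isolating G F {x}"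
proof -
  let ?S = "verts G - closed_nbhd G {x}"
  have "card ?S < card (verts F)"
    using psubset_card_mono[of "verts G" ?S] fin x card_V closed_nbhd_subset[of "{x}" G] by fastforce
  then have "\<not> contains_copy (induced G ?S) F"
    using contains_copy_card_verts fin by fastforce
  then have iso: "isolating G F {x}"
    using x by (simp add: isolating_def)
  have "\<not> isolating G F {}"
    using contains_copy_induced_verts[OF copy wf] by (simp add: isolating_def)
  then have "card {x} \<le> card D" if "isolating G F D" for D
    using that fin finite_subset[of D "verts G"] by (cases "D = {}") (auto simp: isolating_def Suc_le_eq card_gt_0_iff)
  then show ?thesis
    using iota_eqI[OF iso] iso by (simp add: min_isolating_def)
qed

locale pure_special_rep =
  fixes m :: nat and F :: "'b graph" and G :: "'a graph" and q :: nat and T :: "'a graph"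
    and v :: "nat \<Rightarrow> 'a" and Fc :: "nat \<Rightarrow> 'a graph" and w :: "nat \<Rightarrow> 'a"
  assumes wf_F: "wf_graph F" and dominating_F: "dominating_vertex_exists F"
    and edge_F: "edges F \<noteq> {}"
    and rep: "special_rep m F G q T v Fc w"
begin

lemma q_pos: "1 \<le> q"
  and m_eq: "m + 1 = q * (card (edges F) + 2)"
  and tree_T: "is_tree T"
  and verts_T: "verts T = v ` {..<q}"
  and inj_v: "inj_on v {..<q}"
  and iso_Fc: "i < q \<Longrightarrow> isomorphic F (Fc i)"
  and Fc_disjoint: "i < q \<Longrightarrow> j < q \<Longrightarrow> i \<noteq> j \<Longrightarrow> verts (Fc i) \<inter> verts (Fc j) = {}"
  and Fc_T_disjoint: "i < q \<Longrightarrow> verts (Fc i) \<inter> verts T = {}"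
  and w_in_Fc: "i < q \<Longrightarrow> w i \<in> verts (Fc i)"
  and G_eq: "G = (verts T \<union> (\<Union>i<q. verts (Fc i)), edges T \<union> (\<Union>i<q. edges (Fc i) \<union> {{v i, w i}}))"
  using rep unfolding special_rep_def by blast+

lemma verts_G: "verts G = verts T \<union> (\<Union>i<q. verts (Fc i))"
  by (subst G_eq) simp

lemma edges_G: "edges G = edges T \<union> (\<Union>i<q. edges (Fc i) \<union> {{v i, w i}})"
  by (subst G_eq) simp

lemma wf_T: "wf_graph T"
  using tree_T by (simp add: is_tree_def)

lemma wf_Fc: "i < q \<Longrightarrow> wf_graph (Fc i)"
  using iso_Fc graph_iso_wf_graph wf_F by (metis isomorphic_def)

lemma card_verts_Fc: "i < q \<Longrightarrow> card (verts (Fc i)) = card (verts F)"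
  using iso_Fc graph_iso_card_verts by (metis isomorphic_def)

lemma card_edges_Fc: "i < q \<Longrightarrow> card (edges (Fc i)) = card (edges F)"
  using iso_Fc graph_iso_card_edges wf_F by (metis isomorphic_def)

lemma two_le_card_verts_F: "2 \<le> card (verts F)"
  using wf_graph_two_le_card_verts[OF wf_F edge_F] .

lemma nonempty_verts_F: "verts F \<noteq> {}"
  using two_le_card_verts_F by auto

lemma finite_verts_Fc: "i < q \<Longrightarrow> finite (verts (Fc i))"
  using wf_Fc by (simp add: wf_graph_def)

lemma finite_verts_G: "finite (verts G)"
  using wf_T finite_verts_Fc by (simp add: verts_G wf_graph_def)

lemma v_in_T: "i < q \<Longrightarrow> v i \<in> verts T"
  by (simp add: verts_T)

lemma v_notin_Fc: "i < q \<Longrightarrow> j < q \<Longrightarrow> v i \<notin> verts (Fc j)"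
  using Fc_T_disjoint v_in_T by blast

lemma v_ne_w: "i < q \<Longrightarrow> v i \<noteq> w i"
  using v_notin_Fc w_in_Fc by metis

lemma verts_T_subset: "verts T \<subseteq> verts G"
  by (simp add: verts_G)

lemma verts_Fc_subset: "i < q \<Longrightarrow> verts (Fc i) \<subseteq> verts G"
  by (auto simp: verts_G)

lemma edges_Fc_subset: "i < q \<Longrightarrow> edges (Fc i) \<subseteq> edges G"
  by (auto simp: edges_G)

lemma edge_vw: "i < q \<Longrightarrow> {v i, w i} \<in> edges G"
  by (auto simp: edges_G)

lemma Fc_neighbour: "i < q \<Longrightarrow> x \<in> verts (Fc i) \<Longrightarrow> \<exists>y. y \<noteq> x \<and> {x, y} \<in> edges (Fc i)"
  using iso_Fc graph_iso_dominating_vertex_exists[OF _ dominating_F] card_verts_Fc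
    two_le_card_verts_F dominating_vertex_exists_neighbour
  by (metis isomorphic_def)

definition constituent :: "nat \<Rightarrow> 'a set" where
  "constituent i = insert (v i) (verts (Fc i))"

lemma constituent_disjoint:
  assumes "i < q" "j < q" "i \<noteq> j"
  shows "constituent i \<inter> constituent j = {}"
proof -
  have "v i \<noteq> v j"
    using assms inj_v by (auto dest: inj_onD)
  then show ?thesis
    using assms Fc_disjoint[OF assms] v_notin_Fc unfolding constituent_def by blast
qed

lemma card_constituent: "i < q \<Longrightarrow> card (constituent i) = Suc (card (verts F))"
  using v_notin_Fc finite_verts_Fc card_verts_Fc by (simp add: constituent_def)

lemma verts_G_constituents: "verts G = (\<Union>j<q. constituent j)"
  unfolding verts_G verts_T constituent_def by blast

lemma edge_G_cases:
  assumes "e \<in> edges G"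
  obtains "e \<in> edges T"
    | j where "j < q" "e \<in> edges (Fc j)"
    | j where "j < q" "e = {v j, w j}"
proof -
  have "e \<in> edges T \<or> (\<exists>j<q. e \<in> edges (Fc j) \<or> e = {v j, w j})"
    using assms by (auto simp: edges_G)
  then show thesis
    using that by metis
qed

lemma edge_G_within:
  assumes e: "e \<in> edges G"
  shows "e \<in> edges T \<or> (\<exists>j<q. e \<subseteq> constituent j)"
proof (cases rule: edge_G_cases[OF e])
  case (2 j)
  then have "e \<subseteq> verts (Fc j)"
    using wf_graph_edge_subset[OF wf_Fc] by blast
  then have "e \<subseteq> constituent j"
    by (auto simp: constituent_def)
  with 2 show ?thesis by blast
next
  case (3 j)
  then have "e \<subseteq> constituent j"
    using w_in_Fc by (simp add: constituent_def)
  with 3 show ?thesis by blast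
qed simp

lemma wf_G: "wf_graph G"
  unfolding wf_graph_def
proof (intro conjI ballI)
  show "finite (verts G)"
    by (rule finite_verts_G)
  fix e assume "e \<in> edges G"
  then show "\<exists>a b. e = {a, b} \<and> a \<noteq> b \<and> a \<in> verts G \<and> b \<in> verts G"
  proof (cases rule: edge_G_cases)
    case 1
    then show ?thesis using wf_T by (fastforce simp: wf_graph_def verts_G)
  next
    case (2 i)
    then show ?thesis using wf_Fc[of i] by (fastforce simp: wf_graph_def verts_G)
  next
    case (3 i)
    then show ?thesis using Fc_T_disjoint w_in_Fc v_in_T by (fastforce simp: verts_G)
  qed
qed

lemma neighbour_in_constituent:
  assumes j: "j < q" and y: "y \<in> verts (Fc j)" and e: "{y, z} \<in> edges G"
  shows "z \<in> constituent j"
proof -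
  have "y \<notin> verts T"
    using j y Fc_T_disjoint by blast
  then have "{y, z} \<notin> edges T"
    using wf_graph_edge_subset[OF wf_T] by blast
  then obtain l where "l < q" "{y, z} \<subseteq> constituent l"
    using edge_G_within[OF e] by blast
  moreover have "y \<in> constituent j"
    using y by (simp add: constituent_def)
  ultimately show ?thesis
    using j constituent_disjoint by blast
qed

text \<open>Removing two vertices of every constituent and all but at most one quotient vertex leaves
  pieces of fewer than |V(F)| vertices, with no edges between different pieces.\<close>

lemma no_copy_in_remainder:
  assumes hit: "\<And>j. j < q \<Longrightarrow> \<exists>a b. a \<noteq> b \<and> {a, b} \<subseteq> constituent j \<inter> R"
    and tree_hit: "verts T - {t} \<subseteq> R"
  shows "\<not> contains_copy (induced G (verts G - R)) F"
proof
  let ?S = "verts G - R"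
  assume "contains_copy (induced G ?S) F"
  then obtain y where y: "y \<in> ?S" and large: "card (verts F) \<le> card (closed_nbhd G {y} \<inter> ?S)"
    using contains_copy_induced_large_nbhd[OF _ dominating_F] finite_verts_G by blast
  then obtain j where j: "j < q" "y \<in> constituent j"
    using verts_G_constituents by blast
  have "closed_nbhd G {y} \<inter> ?S \<subseteq> constituent j - R"
  proof
    fix z assume z: "z \<in> closed_nbhd G {y} \<inter> ?S"
    show "z \<in> constituent j - R"
    proof (cases "z = y")
      case False
      then have e: "{y, z} \<in> edges G"
        using z by (auto simp: closed_nbhd_def)
      have "{y, z} \<notin> edges T"
        using wf_graph_edge_subset[OF wf_T] tree_hit y z False by blast
      then obtain l where "l < q" "{y, z} \<subseteq> constituent l"
        using edge_G_within[OF e] by blast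
      then show ?thesis
        using j z constituent_disjoint by blast
    qed (use j y in blast)
  qed
  moreover obtain a b where ab: "a \<noteq> b" "{a, b} \<subseteq> constituent j \<inter> R"
    using hit[OF j(1)] by blast
  ultimately have "closed_nbhd G {y} \<inter> ?S \<subseteq> constituent j - {a, b}"
    by blast
  moreover have fin: "finite (constituent j)"
    using finite_verts_Fc[OF j(1)] by (simp add: constituent_def)
  ultimately have "card (closed_nbhd G {y} \<inter> ?S) \<le> card (constituent j - {a, b})"
    by (intro card_mono) simp_all
  also have "\<dots> = card (constituent j) - 2"
    using ab by (subst card_Diff_subset) auto
  finally have "card (closed_nbhd G {y} \<inter> ?S) \<le> card (constituent j) - 2" .
  with large card_constituent[OF j(1)] two_le_card_verts_F show False
    by simp
qed

lemma isolating_meets_constituent: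
  assumes iso: "isolating G F D" and j: "j < q"
  shows "D \<inter> constituent j \<noteq> {}"
proof
  assume missed: "D \<inter> constituent j = {}"
  let ?S = "verts G - closed_nbhd G D"
  have "y \<notin> closed_nbhd G D" if y: "y \<in> verts (Fc j)" for y
  proof
    assume "y \<in> closed_nbhd G D"
    then obtain u where "u \<in> D" "u = y \<or> {u, y} \<in> edges G"
      by (auto simp: closed_nbhd_def)
    then show False
      using missed neighbour_in_constituent[OF j y] y by (auto simp: constituent_def insert_commute)
  qed
  then have "verts (Fc j) \<subseteq> ?S"
    using j by (auto simp: verts_G)
  moreover have "edges (Fc j) \<subseteq> edges (induced G ?S)"
    using j calculation wf_graph_edge_subset[OF wf_Fc[OF j]] by (auto simp: edges_G)
  ultimately have "contains_copy (induced G ?S) F"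
    using iso_Fc[OF j] contains_copy_if_iso_subgraph by (metis isomorphic_def verts_induced)
  with iso show False
    by (simp add: isolating_def)
qed

lemma card_isolating_ge:
  assumes iso: "isolating G F D"
  shows "q \<le> card D"
proof -
  have "\<forall>j\<in>{..<q}. \<exists>d. d \<in> D \<inter> constituent j"
    using isolating_meets_constituent[OF iso] by blast
  then obtain pick where pick: "\<And>j. j < q \<Longrightarrow> pick j \<in> D \<inter> constituent j"
    using bchoice[of "{..<q}"] by (metis lessThan_iff)
  have "inj_on pick {..<q}"
  proof (rule inj_onI)
    fix i j assume "i \<in> {..<q}" "j \<in> {..<q}" "pick i = pick j"
    then show "i = j"
      using pick[of i] pick[of j] constituent_disjoint[of i j] by auto
  qed
  moreover have "finite D"
    using iso finite_verts_G by (metis isolating_def finite_subset)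
  moreover have "pick ` {..<q} \<subseteq> D"
    using pick by auto
  ultimately show ?thesis
    using card_inj_on_le[of pick "{..<q}" D] by simp
qed

lemma constituent_hit_at_quotient_vertex:
  assumes j: "j < q" and "v j \<in> D" and "closed_nbhd G D \<subseteq> R"
  shows "\<exists>a b. a \<noteq> b \<and> {a, b} \<subseteq> constituent j \<inter> R"
proof (intro exI conjI)
  show "v j \<noteq> w j"
    using v_ne_w[OF j] .
  have "w j \<in> closed_nbhd G D"
    using closed_nbhdI[OF \<open>v j \<in> D\<close> edge_vw[OF j]] w_in_Fc[OF j] verts_Fc_subset[OF j] by blast
  then show "{v j, w j} \<subseteq> constituent j \<inter> R"
    using assms w_in_Fc[OF j] closed_nbhd_subset[of D G] by (auto simp: constituent_def)
qed

lemma isolating_verts_T: "isolating G F (verts T)"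
proof -
  let ?R = "closed_nbhd G (verts T)"
  have "\<not> contains_copy (induced G (verts G - ?R)) F"
  proof (rule no_copy_in_remainder)
    show "\<exists>a b. a \<noteq> b \<and> {a, b} \<subseteq> constituent j \<inter> ?R" if "j < q" for j
      using constituent_hit_at_quotient_vertex[OF that v_in_T[OF that] order_refl] .
    show "verts T - {v 0} \<subseteq> ?R"
      using closed_nbhd_subset[of "verts T" G] by blast
  qed
  then show ?thesis
    using verts_T_subset by (simp add: isolating_def)
qed

lemma card_verts_T: "card (verts T) = q"
  using inj_v by (simp add: verts_T card_image)

lemma iota_G: "iota G F = q"
  using iota_eqI[OF isolating_verts_T] card_isolating_ge card_verts_T by simp

lemma card_other_quotient_verts: "i < q \<Longrightarrow> card (v ` ({..<q} - {i})) = q - 1"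
  using inj_v by (simp add: card_image inj_on_subset)

lemma isolating_through_Fc_vertex:
  assumes i: "i < q" and x: "x \<in> verts (Fc i)"
  shows "isolating G F (insert x (v ` ({..<q} - {i})))"
proof -
  let ?D = "insert x (v ` ({..<q} - {i}))"
  let ?R = "closed_nbhd G ?D"
  have D: "?D \<subseteq> verts G"
    using x verts_Fc_subset[OF i] verts_T_subset by (auto simp: verts_T)
  obtain x' where x': "x' \<noteq> x" "{x, x'} \<in> edges (Fc i)"
    using Fc_neighbour[OF i x] by blast
  have "\<not> contains_copy (induced G (verts G - ?R)) F"
  proof (rule no_copy_in_remainder)
    show "\<exists>a b. a \<noteq> b \<and> {a, b} \<subseteq> constituent j \<inter> ?R" if j: "j < q" for j
    proof (cases "j = i")
      case True
      have "x' \<in> verts (Fc i)"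
        using x' wf_graph_edge_subset[OF wf_Fc[OF i]] by blast
      then have "x' \<in> ?R"
        using closed_nbhdI[of x ?D x' G] x' edges_Fc_subset[OF i] verts_Fc_subset[OF i] by blast
      with True x x' \<open>x' \<in> verts (Fc i)\<close> show ?thesis
        using closed_nbhd_subset[of ?D G] by (intro exI[of _ x] exI[of _ x']) (auto simp: constituent_def)
    next
      case False
      with j show ?thesis
        by (intro constituent_hit_at_quotient_vertex[of _ ?D]) auto
    qed
    show "verts T - {v i} \<subseteq> ?R"
      using closed_nbhd_subset[of ?D G] by (auto simp: verts_T)
  qed
  with D show ?thesis
    by (simp add: isolating_def)
qed

lemma card_through_Fc_vertex:
  assumes i: "i < q" and x: "x \<in> verts (Fc i)"
  shows "card (insert x (v ` ({..<q} - {i}))) = q"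
proof -
  have "x \<notin> v ` ({..<q} - {i})"
    using x Fc_T_disjoint[OF i] by (auto simp: verts_T)
  then show ?thesis
    using card_other_quotient_verts[OF i] q_pos by simp
qed

lemma min_isolating_through:
  assumes x: "x \<in> verts G"
  shows "\<exists>D. min_isolating G F D \<and> x \<in> D"
proof (cases "x \<in> verts T")
  case True
  then show ?thesis
    using isolating_verts_T card_verts_T iota_G by (auto simp: min_isolating_def)
next
  case False
  then obtain i where "i < q" "x \<in> verts (Fc i)"
    using x verts_G by blast
  then show ?thesis
    using isolating_through_Fc_vertex card_through_Fc_vertex iota_G
    by (intro exI[of _ "insert x (v ` ({..<q} - {i}))"]) (simp add: min_isolating_def)
qed

lemma quotient_vertex_dominated:
  assumes q: "2 \<le> q" and i: "i < q"
  shows "v i \<in> closed_nbhd G (v ` ({..<q} - {i}))"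
proof -
  obtain l where l: "l < q" "l \<noteq> i"
    using q i by (metis One_nat_def less_2_cases less_le_trans not_less_eq numeral_2_eq_2 zero_less_Suc)
  have "v l \<noteq> v i"
    using l i inj_v by (auto dest: inj_onD)
  then obtain z where z: "{v i, z} \<in> edges T"
    using connected_graph_neighbour[of T "v i" "v l"] tree_T v_in_T i l by (auto simp: is_tree_def)
  then have "z \<in> verts T" "z \<noteq> v i"
    using wf_T by (auto simp: wf_graph_def doubleton_eq_iff)
  then have "z \<in> v ` ({..<q} - {i})"
    by (auto simp: verts_T)
  moreover have "{z, v i} \<in> edges G"
    using z by (simp add: edges_G insert_commute)
  ultimately show ?thesis
    using v_in_T[OF i] verts_T_subset by (blast intro: closed_nbhdI)
qed

lemma isolating_delete_vertex_through:
  assumes q: "2 \<le> q" and i: "i < q" and x: "x \<in> verts (Fc i)"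
  shows "isolating (delete_vertex G x) F (v ` ({..<q} - {i}))"
proof (rule isolating_delete_vertexI)
  let ?D = "v ` ({..<q} - {i})"
  let ?R = "insert x (closed_nbhd G ?D)"
  show "?D \<subseteq> verts G - {x}"
    using x Fc_T_disjoint[OF i] verts_T_subset by (auto simp: verts_T)
  note vi = quotient_vertex_dominated[OF q i]
  show "\<not> contains_copy (induced G (verts G - ?R)) F"
  proof (rule no_copy_in_remainder)
    show "\<exists>a b. a \<noteq> b \<and> {a, b} \<subseteq> constituent j \<inter> ?R" if j: "j < q" for j
    proof (cases "j = i")
      case True
      with x vi v_notin_Fc[OF i i] show ?thesis
        by (intro exI[of _ x] exI[of _ "v i"]) (auto simp: constituent_def)
    next
      case False
      with j show ?thesis
        by (intro constituent_hit_at_quotient_vertex[of _ ?D]) auto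
    qed
    show "verts T - {v i} \<subseteq> ?R"
      using closed_nbhd_subset[of ?D G] by (auto simp: verts_T)
  qed
qed

lemma representation_at_pendant:
  assumes q: "q = 1" and x: "x \<in> verts (Fc 0)" and copy: "contains_copy (delete_vertex G x) F"
  shows "\<exists>y. special_rep m F G 1 ({x}, {}) (\<lambda>_. x) (\<lambda>_. delete_vertex G x) (\<lambda>_. y)"
proof -
  have "edges T = {}"
    using wf_T q by (fastforce simp: wf_graph_def verts_T)
  then have edges_G1: "edges G = insert {v 0, w 0} (edges (Fc 0))"
    using q by (simp add: edges_G lessThan_Suc)
  have "{v 0, w 0} \<notin> edges (Fc 0)"
    using q v_notin_Fc wf_graph_edge_subset[OF wf_Fc] by blast
  then have card_E: "card (edges G) = Suc (card (edges F))"
    using q edges_G1 wf_graph_finite_edges[OF wf_Fc] card_edges_Fc by simp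
  have card_V: "card (verts G) = Suc (card (verts F))"
    using q verts_G_constituents card_constituent by (simp add: lessThan_Suc)
  obtain x' where "{x, x'} \<in> edges (Fc 0)"
    using Fc_neighbour q x by auto
  then have e: "{x, x'} \<in> edges G" "x \<in> {x, x'}"
    using q edges_Fc_subset by auto
  note pendant = delete_vertex_contains_copy_pendant[OF wf_F wf_G card_V card_E e copy]
  obtain y where y: "y \<noteq> x" "y \<in> verts G" "edges G = insert {x, y} (edges (delete_vertex G x))"
    using pendant(2) by blast
  have x_G: "x \<in> verts G"
    using q x verts_Fc_subset by auto
  have one: "{..<1::nat} = {0}"
    by auto
  have V: "{x} \<union> (\<Union>i<(1::nat). verts (delete_vertex G x)) = verts G"
    using x_G by (auto simp: one)
  have E: "{} \<union> (\<Union>i<(1::nat). edges (delete_vertex G x) \<union> {{x, y}}) = edges G"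
    using y(3) by (auto simp: one)
  show ?thesis
    unfolding special_rep_def verts_pair edges_pair
  proof (intro exI[of _ y] conjI)
    show "m + 1 = 1 * (card (edges F) + 2)"
      using m_eq q by simp
    show "G = ({x} \<union> (\<Union>i<(1::nat). verts (delete_vertex G x)),
              {} \<union> (\<Union>i<(1::nat). edges (delete_vertex G x) \<union> {{x, y}}))"
      unfolding V E by (rule graph_eq_pair)
  qed (use is_tree_singleton pendant(1) y(1,2) in \<open>auto simp: lessThan_Suc\<close>)
qed

lemma iota_delete_vertex:
  assumes x: "x \<in> verts G"
    and not_quotient: "\<forall>q' T' v' Fc' w'. special_rep m F G q' T' v' Fc' w' \<longrightarrow> x \<notin> verts T'"
  shows "iota (delete_vertex G x) F = q - 1"
proof -
  have "x \<notin> verts T"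
    using not_quotient rep by blast
  then obtain i where i: "i < q" "x \<in> verts (Fc i)"
    using x verts_G by blast
  have "iota (delete_vertex G x) F \<le> q - 1"
  proof (cases "q = 1")
    case True
    with i have "\<not> contains_copy (delete_vertex G x) F"
      using representation_at_pendant not_quotient by fastforce
    then have "isolating (delete_vertex G x) F {}"
      by (simp add: isolating_def delete_vertex_def induced_def)
    with True show ?thesis
      using iota_le by fastforce
  next
    case False
    with q_pos have "2 \<le> q"
      by simp
    then show ?thesis
      using iota_le[OF isolating_delete_vertex_through[OF _ i]] card_other_quotient_verts[OF i(1)]
      by simp
  qed
  moreover have "q \<le> iota (delete_vertex G x) F + 1"
    using iota_le_iota_delete_vertex[OF nonempty_verts_F x] iota_G by simp
  ultimately show ?thesis
    by linarith
qed

end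

lemma min_isolating_add_edge:
  assumes wf: "wf_graph F" and iso: "isomorphic (add_edge F e) G" and x: "x \<in> verts G"
  shows "min_isolating G F {x}"
proof -
  obtain g where "graph_iso (add_edge F e) G g"
    using iso by (auto simp: isomorphic_def)
  then have bij: "bij_betw g (verts F) (verts G)" and E: "edges G = (`) g ` insert e (edges F)"
    by (simp_all add: graph_iso_def add_edge_def)
  have "contains_copy G F"
    unfolding contains_copy_def
    using bij E by (intro exI[of _ g]) (auto simp: bij_betw_def)
  moreover have "finite (verts G)"
    using bij wf by (metis bij_betw_finite wf_graph_def)
  moreover have "card (verts G) \<le> card (verts F)"
    using bij_betw_same_card[OF bij] by simp
  ultimately show ?thesis
    using min_isolating_singleton[OF wf _ _ _ x] by blast
qed

lemma min_isolating_through_any_vertex: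
  fixes F :: "'b graph" and G :: "'a graph"
  assumes wf_F: "wf_graph F" and dominating_F: "dominating_vertex_exists F" and edge_F: "edges F \<noteq> {}"
    and G: "(\<exists>m. pure_special m F G) \<or> (\<exists>e. complement_edge F e \<and> isomorphic (add_edge F e) G)"
    and x: "x \<in> verts G"
  shows "\<exists>D. min_isolating G F D \<and> x \<in> D"
  using G
proof
  assume "\<exists>m. pure_special m F G"
  then obtain m q T v Fc w where "special_rep m F G q T v Fc w"
    unfolding pure_special_def by blast
  then interpret pure_special_rep m F G q T v Fc w
    using wf_F dominating_F edge_F by unfold_locales
  show ?thesis
    using min_isolating_through[OF x] .
next
  assume "\<exists>e. complement_edge F e \<and> isomorphic (add_edge F e) G"
  then show ?thesis
    using min_isolating_add_edge[OF wf_F _ x] by blast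
qed

lemma iota_delete_non_quotient_vertex:
  fixes F :: "'b graph" and G :: "'a graph"
  assumes wf_F: "wf_graph F" and dominating_F: "dominating_vertex_exists F" and edge_F: "edges F \<noteq> {}"
    and special: "pure_special m F G" and x: "x \<in> verts G"
    and not_quotient: "\<forall>q T v Fc w. special_rep m F G q T v Fc w \<longrightarrow> x \<notin> verts T"
  shows "iota (delete_vertex G x) F = iota G F - 1"
proof -
  obtain q T v Fc w where "special_rep m F G q T v Fc w"
    using special unfolding pure_special_def by blast
  then interpret pure_special_rep m F G q T v Fc w
    using wf_F dominating_F edge_F by unfold_locales
  show ?thesis
    using iota_delete_vertex[OF x not_quotient] iota_G by simp
qed

theorem lemma3p4:
  fixes F :: "'b graph" and G :: "'a graph"
  assumes "wf_graph F"
    and "dominating_vertex_exists F"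
    and "card (edges F) \<ge> 3"
    and "(\<exists>m. pure_special m F G) \<or> (\<exists>e. complement_edge F e \<and> isomorphic (add_edge F e) G)"
  shows "(\<forall>x\<in>verts G. \<exists>D. min_isolating G F D \<and> x \<in> D) \<and>
         (\<forall>m x. pure_special m F G \<longrightarrow> x \<in> verts G \<longrightarrow>
            (\<forall>q T v Fc w. special_rep m F G q T v Fc w \<longrightarrow> x \<notin> verts T) \<longrightarrow>
            iota (delete_vertex G x) F = iota G F - 1)"
proof (intro conjI ballI allI impI)
  have edge_F: "edges F \<noteq> {}"
    using assms(3) by auto
  show "\<exists>D. min_isolating G F D \<and> x \<in> D" if "x \<in> verts G" for x
    using min_isolating_through_any_vertex[OF assms(1,2) edge_F assms(4) that] .
  show "iota (delete_vertex G x) F = iota G F - 1"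
    if "pure_special m F G" "x \<in> verts G"
      "\<forall>q T v Fc w. special_rep m F G q T v Fc w \<longrightarrow> x \<notin> verts T" for m x
    using iota_delete_non_quotient_vertex[OF assms(1,2) edge_F that] .
qed

end
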